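(* Let $p_1,\dots,p_\theta\ge0$ with $\sum_i p_i=1$. Then \[ \mathbb E\Big[\prod_{\gamma\in\mathcal C(\omega)}\Big(\sum_{i=1}^\theta p_i^{|\gamma|}\Big)\Big]=\sum_{\lambda\vdash n}\binom{n}{\lambda}\Big(\sum_{\kappa\in K(\lambda)}\prod_{i=1}^\theta p_i^{\kappa_i}\Big)\sum_{\sigma\in\mathcal T_\lambda}f(\sigma). \]
   Context: Fix $\theta\in\{2,3,\dots\}$, $\beta>0$. Let $V=\{1,\dots,n\}$, $E$ the set of unordered pairs of distinct elements of $V$. Under $\mathbb P$ (expectation $\mathbb E$), let $\omega=(\omega_{xy}:xy\in E)$ be independent rate-1 Poisson point processes on $[0,\beta/n]$, and $\sigma(\omega)\in\mathcal S_n$ the time-ordered composition of the transpositions $(x,y)$ over all points $t\in\omega_{xy}$. $\mathcal C(\omega)$ is the set of cycles of $\sigma(\omega)$ (including fixed points), $|\gamma|$ the size of cycle $\gamma$, and $f(\sigma)=\mathbb P(\sigma(\omega)=\sigma)$. A composition of $n$ is a vector $\kappa=(\kappa_1,\dots,\kappa_\theta)$ of nonnegative integers with $\sum\kappa_j=n$; it is a partition, written $\lambda\vdash n$, if moreover $\lambda_1\ge\dots\ge\lambda_\theta$ (so partitions have exactly $\theta$ entries, some possibly $0$). $K(\lambda)$ is the set of compositions obtained by reordering the entries of $\lambda$. $\binom{n}{\lambda}=n!/(\lambda_1!\cdots\lambda_\theta!)$. The Young subgroup $\mathcal T_\lambda\subseteq\mathcal S_n$ consists of permutations fixing each of the sets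 $\{1,\dots,\lambda_1\}$, $\{\lambda_1+1,\dots,\lambda_1+\lambda_2\}$, etc. *)

theory Defs
  imports "HOL-Analysis.Analysis" "HOL-Combinatorics.Combinatorics"
begin

text \<open>Edges of the complete graph on V = {1..n}: unordered pairs, represented as (x,y) with x < y.\<close>
definition edges :: "nat \<Rightarrow> (nat \<times> nat) set" where
  "edges n = {(x,y). 1 \<le> x \<and> x < y \<and> y \<le> n}"

text \<open>Time-ordered composition of the transpositions of a word of edges
  (the earliest transposition is applied first).\<close>
definition word_perm :: "(nat \<times> nat) list \<Rightarrow> nat \<Rightarrow> nat" where
  "word_perm w = foldl (\<lambda>\<sigma> e. Transposition.transpose (fst e) (snd e) \<circ> \<sigma>) id w"

definition words :: "nat \<Rightarrow> nat \<Rightarrow> (nat \<times> nat) list set" where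
  "words n k = {w. length w = k \<and> set w \<subseteq> edges n}"

text \<open>Expectation of a functional G of \<sigma>(\<omega>), where \<omega> consists of independent rate-1
  Poisson processes on [0,\<beta>/n], one per edge.  Only the time-ordered word of edges of \<omega>
  matters; with t = \<beta>/n, each fixed word of length k occurs with probability
  exp(-|E| t) t^k / k!.\<close>
definition rp_expect :: "nat \<Rightarrow> real \<Rightarrow> ((nat \<Rightarrow> nat) \<Rightarrow> real) \<Rightarrow> real" where
  "rp_expect n \<beta> G =
     (\<Sum>k. exp (- real (card (edges n)) * (\<beta> / real n)) * (\<beta> / real n) ^ k / fact k
            * (\<Sum>w\<in>words n k. G (word_perm w)))"

definition rp_law :: "nat \<Rightarrow> real \<Rightarrow> (nat \<Rightarrow> nat) \<Rightarrow> real" where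
  "rp_law n \<beta> \<sigma> = rp_expect n \<beta> (\<lambda>\<tau>. if \<tau> = \<sigma> then 1 else 0)"

definition perm_cycles :: "nat \<Rightarrow> (nat \<Rightarrow> nat) \<Rightarrow> nat set set" where
  "perm_cycles n \<sigma> = (\<lambda>x. orbit \<sigma> x) ` {1..n}"

text \<open>Partitions of n into exactly \<theta> (possibly zero) parts, as lists of length \<theta>.\<close>
definition partitions_theta :: "nat \<Rightarrow> nat \<Rightarrow> nat list set" where
  "partitions_theta \<theta> n = {l. length l = \<theta> \<and> sum_list l = n \<and> sorted_wrt (\<ge>) l}"

definition reorderings :: "nat list \<Rightarrow> nat list set" where
  "reorderings l = {k. length k = length l \<and> mset k = mset l}"

definition multinom :: "nat \<Rightarrow> nat list \<Rightarrow> real" where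
  "multinom n l = fact n / (\<Prod>i<length l. fact (l ! i))"

definition block :: "nat list \<Rightarrow> nat \<Rightarrow> nat set" where
  "block l j = {sum_list (take j l) + 1 .. sum_list (take (Suc j) l)}"

definition young_subgroup :: "nat \<Rightarrow> nat list \<Rightarrow> (nat \<Rightarrow> nat) set" where
  "young_subgroup n l = {\<sigma>. \<sigma> permutes {1..n} \<and> (\<forall>j<length l. \<sigma> ` block l j = block l j)}"

end

theory Submission
  imports Defs
begin

text \<open>
  Write f for the law of \<sigma>(\<omega>). The left-hand side is the finite sum over permutations \<sigma>
  of f(\<sigma>) times the cycle product, and f is a class function: relabelling the vertices by q
  permutes the words of edges and conjugates \<sigma>(\<omega>) by q.

  Expanding the product over the cycles of \<sigma> turns it into a sum, over the colourings c of
  {1..n} with \<theta> colours that are constant on cycles (i.e. invariant under \<sigma>), of the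
  products of p at the colours of the vertices. After exchanging the sums, a colouring c
  contributes the f-mass of its stabiliser. Up to relabelling the vertices, c is the colouring
  by consecutive blocks whose sizes are its colour counts in decreasing order \<lambda>; so its
  stabiliser is conjugate to the Young subgroup T_\<lambda> and has the same f-mass.
  Finally, exactly multinom n \<kappa> colourings have colour counts \<kappa>, and grouping the
  compositions \<kappa> by their decreasing rearrangement \<lambda> gives the right-hand side.
\<close>

section \<open>The law of the random transposition product\<close>

lemma finite_edges: "finite (edges n)"
  by (rule finite_subset[of _ "{1..n} \<times> {1..n}"]) (auto simp: edges_def)

lemma words_eq_lists: "words n k = {w. set w \<subseteq> edges n \<and> length w = k}"
  by (auto simp: words_def)

lemma finite_words: "finite (words n k)"
  unfolding words_eq_lists by (rule finite_lists_length_eq[OF finite_edges])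

lemma card_words: "card (words n k) = card (edges n) ^ k"
  unfolding words_eq_lists by (rule card_lists_length_eq[OF finite_edges])

lemma word_perm_Nil [simp]: "word_perm [] = id"
  by (simp add: word_perm_def)

lemma word_perm_snoc [simp]:
  "word_perm (w @ [e]) = Transposition.transpose (fst e) (snd e) \<circ> word_perm w"
  by (simp add: word_perm_def)

lemma word_perm_permutes:
  assumes "w \<in> words n k"
  shows "word_perm w permutes {1..n}"
proof -
  have "set w \<subseteq> edges n" using assms by (simp add: words_def)
  then show ?thesis
  proof (induction w rule: rev_induct)
    case (snoc e w)
    then have "fst e \<in> {1..n}" "snd e \<in> {1..n}" by (auto simp: edges_def)
    then have "Transposition.transpose (fst e) (snd e) permutes {1..n}" by (rule permutes_swap_id)
    moreover have "word_perm w permutes {1..n}" using snoc by simp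
    ultimately show ?case unfolding word_perm_snoc by (rule permutes_compose[rotated])
  qed (simp add: permutes_id)
qed

lemma summable_exp_weighted:
  fixes x C E :: real
  assumes "\<And>k. \<bar>s k\<bar> \<le> C * E ^ k"
  shows "summable (\<lambda>k. x ^ k / fact k * s k)"
proof (rule summable_comparison_test')
  show "summable (\<lambda>k. C * (inverse (fact k) * (\<bar>x\<bar> * E) ^ k))"
    by (intro summable_mult summable_exp)
  fix k
  have "norm (x ^ k / fact k * s k) = \<bar>x\<bar> ^ k / fact k * \<bar>s k\<bar>"
    by (simp add: abs_mult power_abs)
  also have "\<dots> \<le> \<bar>x\<bar> ^ k / fact k * (C * E ^ k)"
    by (intro mult_left_mono assms) auto
  also have "\<dots> = C * (inverse (fact k) * (\<bar>x\<bar> * E) ^ k)"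
    by (simp add: power_mult_distrib field_simps)
  finally show "norm (x ^ k / fact k * s k) \<le> C * (inverse (fact k) * (\<bar>x\<bar> * E) ^ k)" .
qed

definition rp_weight :: "nat \<Rightarrow> real \<Rightarrow> nat \<Rightarrow> real" where
  "rp_weight n \<beta> k = exp (- real (card (edges n)) * (\<beta> / real n)) * (\<beta> / real n) ^ k / fact k"

lemma rp_expect_eq_suminf:
  "rp_expect n \<beta> G = (\<Sum>k. rp_weight n \<beta> k * (\<Sum>w\<in>words n k. G (word_perm w)))"
  by (simp add: rp_expect_def rp_weight_def)

lemma summable_rp_weight:
  assumes "\<And>k. \<bar>s k\<bar> \<le> C * real (card (edges n)) ^ k"
  shows "summable (\<lambda>k. rp_weight n \<beta> k * s k)"
proof -
  let ?t = "\<beta> / real n" and ?E = "real (card (edges n))"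
  have "summable (\<lambda>k. ?t ^ k / fact k * s k)" using assms by (rule summable_exp_weighted)
  then have "summable (\<lambda>k. exp (- ?E * ?t) * (?t ^ k / fact k * s k))" by (rule summable_mult)
  moreover have "rp_weight n \<beta> k * s k = exp (- ?E * ?t) * (?t ^ k / fact k * s k)" for k
    by (simp add: rp_weight_def)
  ultimately show ?thesis by simp
qed

lemma sum_words_eq_sum_perms:
  "(\<Sum>w\<in>words n k. G (word_perm w))
     = (\<Sum>\<sigma> | \<sigma> permutes {1..n}. real (card {w \<in> words n k. word_perm w = \<sigma>}) * G \<sigma>)"
proof -
  have "word_perm ` words n k \<subseteq> {\<sigma>. \<sigma> permutes {1..n}}" using word_perm_permutes by blast
  then have "(\<Sum>w\<in>words n k. G (word_perm w))
      = (\<Sum>\<sigma> | \<sigma> permutes {1..n}. \<Sum>w\<in>{w \<in> words n k. word_perm w = \<sigma>}. G (word_perm w))"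
    by (intro sum.group[symmetric] finite_words finite_permutations finite_atLeastAtMost)
  also have "\<dots> = (\<Sum>\<sigma> | \<sigma> permutes {1..n}. real (card {w \<in> words n k. word_perm w = \<sigma>}) * G \<sigma>)"
  proof (rule sum.cong[OF refl])
    fix \<sigma>
    have "(\<Sum>w\<in>{w \<in> words n k. word_perm w = \<sigma>}. G (word_perm w))
        = (\<Sum>w\<in>{w \<in> words n k. word_perm w = \<sigma>}. G \<sigma>)"
      by (rule sum.cong) simp_all
    then show "(\<Sum>w\<in>{w \<in> words n k. word_perm w = \<sigma>}. G (word_perm w))
        = real (card {w \<in> words n k. word_perm w = \<sigma>}) * G \<sigma>"
      by simp
  qed
  finally show ?thesis .
qed

lemma rp_expect_eq_sum_rp_law:
  "rp_expect n \<beta> G = (\<Sum>\<sigma> | \<sigma> permutes {1..n}. rp_law n \<beta> \<sigma> * G \<sigma>)"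
proof -
  let ?P = "{\<sigma>. \<sigma> permutes {1..n}}"
  define N where "N k \<sigma> = real (card {w \<in> words n k. word_perm w = \<sigma>})" for k \<sigma>
  have law: "rp_law n \<beta> \<sigma> = (\<Sum>k. rp_weight n \<beta> k * N k \<sigma>)" for \<sigma>
    by (simp add: rp_law_def rp_expect_eq_suminf N_def sum.inter_filter[symmetric] finite_words)
  have summable: "summable (\<lambda>k. rp_weight n \<beta> k * N k \<sigma>)" for \<sigma>
  proof (rule summable_rp_weight)
    fix k
    have "card {w \<in> words n k. word_perm w = \<sigma>} \<le> card (words n k)"
      by (rule card_mono[OF finite_words]) auto
    then show "\<bar>N k \<sigma>\<bar> \<le> 1 * real (card (edges n)) ^ k" by (simp add: N_def card_words)
  qed
  have "rp_expect n \<beta> G = (\<Sum>k. \<Sum>\<sigma>\<in>?P. rp_weight n \<beta> k * N k \<sigma> * G \<sigma>)"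
    by (simp add: rp_expect_eq_suminf sum_words_eq_sum_perms N_def sum_distrib_left mult.assoc)
  also have "\<dots> = (\<Sum>\<sigma>\<in>?P. \<Sum>k. rp_weight n \<beta> k * N k \<sigma> * G \<sigma>)"
    by (rule suminf_sum) (intro summable_mult2 summable)
  also have "\<dots> = (\<Sum>\<sigma>\<in>?P. rp_law n \<beta> \<sigma> * G \<sigma>)"
    by (simp add: law suminf_mult2 summable)
  finally show ?thesis .
qed

section \<open>Conjugation invariance of the law\<close>

definition edge_image :: "(nat \<Rightarrow> nat) \<Rightarrow> nat \<times> nat \<Rightarrow> nat \<times> nat" where
  "edge_image q e = (min (q (fst e)) (q (snd e)), max (q (fst e)) (q (snd e)))"

lemma transpose_edge_image:
  assumes "bij q"
  shows "Transposition.transpose (fst (edge_image q e)) (snd (edge_image q e))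
       = q \<circ> Transposition.transpose (fst e) (snd e) \<circ> inv q"
proof
  fix x
  have "Transposition.transpose (fst (edge_image q e)) (snd (edge_image q e))
      = Transposition.transpose (q (fst e)) (q (snd e))"
    by (auto simp: edge_image_def min_def max_def transpose_commute)
  moreover have "q (inv q x) = x" "\<And>y. inv q (q y) = y"
    using assms by (simp_all add: bij_is_inj bij_is_surj surj_f_inv_f)
  ultimately show "Transposition.transpose (fst (edge_image q e)) (snd (edge_image q e)) x
      = (q \<circ> Transposition.transpose (fst e) (snd e) \<circ> inv q) x"
    using transpose_apply_commute[OF assms, of "q (fst e)" "q (snd e)" "inv q x"] by simp
qed

lemma word_perm_map_edge_image:
  assumes "bij q"
  shows "word_perm (map (edge_image q) w) = q \<circ> word_perm w \<circ> inv q"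
proof (induction w rule: rev_induct)
  case Nil
  show ?case using assms by (simp add: fun_eq_iff bij_is_surj surj_f_inv_f)
next
  case (snoc e w)
  then show ?case using assms by (simp add: transpose_edge_image fun_eq_iff bij_is_inj)
qed

lemma edge_image_in_edges:
  assumes "q permutes {1..n}" "e \<in> edges n"
  shows "edge_image q e \<in> edges n"
proof -
  obtain a b where e: "e = (a, b)" "a \<in> {1..n}" "b \<in> {1..n}" "a \<noteq> b"
    using assms(2) by (auto simp: edges_def)
  have "q a \<in> {1..n}" "q b \<in> {1..n}"
    using e by (simp_all only: permutes_in_image[OF assms(1)])
  moreover have "q a \<noteq> q b" using e(4) permutes_inj[OF assms(1)] by (simp add: inj_eq)
  ultimately show ?thesis by (auto simp: edge_image_def edges_def e min_def max_def)
qed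

lemma edge_image_inv:
  assumes "q permutes {1..n}" "e \<in> edges n"
  shows "edge_image (inv q) (edge_image q e) = e"
  using assms(2) permutes_inverses(2)[OF assms(1)]
  by (auto simp: edge_image_def edges_def min_def max_def)

lemma bij_betw_map_edge_image:
  assumes "q permutes {1..n}"
  shows "bij_betw (map (edge_image q)) (words n k) (words n k)"
proof (rule bij_betw_byWitness[where f' = "map (edge_image (inv q))"])
  have inv_q: "inv q permutes {1..n}" using assms by (rule permutes_inv)
  have inv_inv_q: "inv (inv q) = q" using assms by (rule permutes_inv_inv)
  show "\<forall>w\<in>words n k. map (edge_image (inv q)) (map (edge_image q) w) = w"
    using edge_image_inv[OF assms] by (auto simp: words_def intro!: map_idI)
  show "\<forall>w\<in>words n k. map (edge_image q) (map (edge_image (inv q)) w) = w"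
    using edge_image_inv[OF inv_q] by (auto simp: words_def inv_inv_q intro!: map_idI)
  show "map (edge_image q) ` words n k \<subseteq> words n k"
    using edge_image_in_edges[OF assms] by (auto simp: words_def subset_iff)
  show "map (edge_image (inv q)) ` words n k \<subseteq> words n k"
    using edge_image_in_edges[OF inv_q] by (auto simp: words_def subset_iff)
qed

lemma rp_law_conj:
  assumes "q permutes {1..n}"
  shows "rp_law n \<beta> (q \<circ> \<sigma> \<circ> inv q) = rp_law n \<beta> \<sigma>"
proof -
  have "bij q" using assms by (rule permutes_bij)
  then have "inv q \<circ> (q \<circ> \<tau> \<circ> inv q) \<circ> q = \<tau>" for \<tau>
    by (simp add: fun_eq_iff bij_is_inj)
  then have conj_eq: "q \<circ> \<tau> \<circ> inv q = q \<circ> \<sigma> \<circ> inv q \<longleftrightarrow> \<tau> = \<sigma>" for \<tau>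
    by metis
  have "(\<Sum>w\<in>words n k. if word_perm w = q \<circ> \<sigma> \<circ> inv q then 1 else 0 :: real)
      = (\<Sum>w\<in>words n k. if word_perm w = \<sigma> then 1 else 0)" for k
  proof -
    have "(\<Sum>w\<in>words n k. if word_perm w = q \<circ> \<sigma> \<circ> inv q then 1 else 0 :: real)
        = (\<Sum>w\<in>words n k. if word_perm (map (edge_image q) w) = q \<circ> \<sigma> \<circ> inv q then 1 else 0)"
      by (rule sum.reindex_bij_betw[OF bij_betw_map_edge_image[OF assms], symmetric])
    also have "\<dots> = (\<Sum>w\<in>words n k. if word_perm w = \<sigma> then 1 else 0)"
      by (simp add: word_perm_map_edge_image[OF \<open>bij q\<close>] conj_eq)
    finally show ?thesis .
  qed
  then show ?thesis by (simp add: rp_law_def rp_expect_def)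
qed

section \<open>Colourings constant on cycles\<close>

definition the_block :: "'a set set \<Rightarrow> 'a \<Rightarrow> 'a set" where
  "the_block P x = (THE B. B \<in> P \<and> x \<in> B)"

lemma the_block_eq:
  assumes P: "partition_on A P" and "B \<in> P" "x \<in> B"
  shows "the_block P x = B"
  unfolding the_block_def
proof (rule the_equality)
  show "B \<in> P \<and> x \<in> B" using assms(2,3) ..
  fix B' assume B': "B' \<in> P \<and> x \<in> B'"
  show "B' = B"
  proof (rule ccontr)
    assume "B' \<noteq> B"
    with B' have "B' \<inter> B = {}"
      by (intro disjointD[OF partition_onD2[OF P] _ \<open>B \<in> P\<close>]) simp_all
    with B' \<open>x \<in> B\<close> show False by blast
  qed
qed

lemma the_block_mem:
  assumes P: "partition_on A P" and "x \<in> A"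
  shows "the_block P x \<in> P" "x \<in> the_block P x"
proof -
  obtain B where "B \<in> P" "x \<in> B" using partition_onD1[OF P] assms(2) by blast
  with the_block_eq[OF P this] show "the_block P x \<in> P" "x \<in> the_block P x" by simp_all
qed

lemma bij_betw_block_colourings:
  assumes P: "partition_on A P"
  shows "bij_betw (\<lambda>g. \<lambda>x\<in>A. g (the_block P x)) (P \<rightarrow>\<^sub>E I)
           {c \<in> A \<rightarrow>\<^sub>E I. \<forall>B\<in>P. \<forall>x\<in>B. \<forall>y\<in>B. c x = c y}"
    (is "bij_betw ?colour _ ?C")
proof (rule bij_betw_byWitness[where f' = "\<lambda>c. \<lambda>B\<in>P. c (SOME x. x \<in> B)"])
  have blocks_sub: "B \<subseteq> A" if "B \<in> P" for B
    using partition_onD1[OF P] that by blast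
  have some_in_block: "(SOME x. x \<in> B) \<in> B" if "B \<in> P" for B
    unfolding some_in_eq using partition_onD3[OF P] that by blast
  show "\<forall>g\<in>P \<rightarrow>\<^sub>E I. (\<lambda>B\<in>P. ?colour g (SOME x. x \<in> B)) = g"
  proof (intro ballI ext)
    fix g B assume g: "g \<in> P \<rightarrow>\<^sub>E I"
    show "(\<lambda>B\<in>P. ?colour g (SOME x. x \<in> B)) B = g B"
    proof (cases "B \<in> P")
      case True
      then have "(SOME x. x \<in> B) \<in> A" "the_block P (SOME x. x \<in> B) = B"
        using some_in_block[OF True] blocks_sub[OF True] the_block_eq[OF P True] by auto
      then show ?thesis using True by simp
    next
      case False
      then show ?thesis using g by (simp add: PiE_def extensional_def)
    qed
  qed
  show "\<forall>c\<in>?C. ?colour (\<lambda>B\<in>P. c (SOME x. x \<in> B)) = c"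
  proof (intro ballI ext)
    fix c x assume c: "c \<in> ?C"
    show "?colour (\<lambda>B\<in>P. c (SOME x. x \<in> B)) x = c x"
    proof (cases "x \<in> A")
      case True
      note block = the_block_mem[OF P True]
      have "\<And>B y z. B \<in> P \<Longrightarrow> y \<in> B \<Longrightarrow> z \<in> B \<Longrightarrow> c y = c z" using c by blast
      then have "c (SOME y. y \<in> the_block P x) = c x"
        using block some_in_block[OF block(1)] by blast
      then show ?thesis using True block(1) by simp
    next
      case False
      then show ?thesis using c by (simp add: PiE_def extensional_def)
    qed
  qed
  show "?colour ` (P \<rightarrow>\<^sub>E I) \<subseteq> ?C"
  proof (rule image_subsetI)
    fix g assume "g \<in> P \<rightarrow>\<^sub>E I"
    then have "?colour g \<in> A \<rightarrow>\<^sub>E I" using the_block_mem(1)[OF P] by auto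
    moreover have "?colour g x = ?colour g y" if "B \<in> P" "x \<in> B" "y \<in> B" for B x y
      using the_block_eq[OF P that(1,2)] the_block_eq[OF P that(1,3)] blocks_sub[OF that(1)] that(2,3)
      by auto
    ultimately show "?colour g \<in> ?C" by blast
  qed
  show "(\<lambda>c. \<lambda>B\<in>P. c (SOME x. x \<in> B)) ` ?C \<subseteq> P \<rightarrow>\<^sub>E I"
  proof (rule image_subsetI)
    fix c assume "c \<in> ?C"
    then have "c \<in> A \<rightarrow>\<^sub>E I" by blast
    then have "c (SOME x. x \<in> B) \<in> I" if "B \<in> P" for B
      using subsetD[OF blocks_sub[OF that] some_in_block[OF that]] by (rule PiE_mem)
    then show "(\<lambda>B\<in>P. c (SOME x. x \<in> B)) \<in> P \<rightarrow>\<^sub>E I" by simp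
  qed
qed

lemma prod_sum_partition_on:
  fixes a :: "'i \<Rightarrow> 'c :: comm_semiring_1"
  assumes "finite A" and P: "partition_on A P" and "finite I"
  shows "(\<Prod>B\<in>P. \<Sum>i\<in>I. a i ^ card B)
       = (\<Sum>c\<in>{c \<in> A \<rightarrow>\<^sub>E I. \<forall>B\<in>P. \<forall>x\<in>B. \<forall>y\<in>B. c x = c y}. \<Prod>x\<in>A. a (c x))"
proof -
  have "(\<Prod>B\<in>P. \<Sum>i\<in>I. a i ^ card B) = (\<Sum>g\<in>P \<rightarrow>\<^sub>E I. \<Prod>B\<in>P. a (g B) ^ card B)"
    using finite_elements[OF assms(1) P] assms(3) by (rule prod_sum_PiE)
  also have "\<dots> = (\<Sum>g\<in>P \<rightarrow>\<^sub>E I. \<Prod>x\<in>A. a ((\<lambda>x\<in>A. g (the_block P x)) x))"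
  proof (rule sum.cong[OF refl])
    fix g
    have "(\<Prod>x\<in>A. a ((\<lambda>x\<in>A. g (the_block P x)) x))
        = (\<Prod>B\<in>P. \<Prod>x\<in>B. a ((\<lambda>x\<in>A. g (the_block P x)) x))"
      by (rule prod.partition[OF assms(1) P])
    also have "\<dots> = (\<Prod>B\<in>P. a (g B) ^ card B)"
    proof (rule prod.cong[OF refl])
      fix B assume "B \<in> P"
      have "(\<lambda>x\<in>A. g (the_block P x)) x = g B" if "x \<in> B" for x
        using the_block_eq[OF P \<open>B \<in> P\<close> that] partition_onD1[OF P] \<open>B \<in> P\<close> that by auto
      then show "(\<Prod>x\<in>B. a ((\<lambda>x\<in>A. g (the_block P x)) x)) = a (g B) ^ card B" by simp
    qed
    finally show "(\<Prod>B\<in>P. a (g B) ^ card B) = (\<Prod>x\<in>A. a ((\<lambda>x\<in>A. g (the_block P x)) x))" ..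
  qed
  also have "\<dots> = (\<Sum>c\<in>{c \<in> A \<rightarrow>\<^sub>E I. \<forall>B\<in>P. \<forall>x\<in>B. \<forall>y\<in>B. c x = c y}. \<Prod>x\<in>A. a (c x))"
    by (rule sum.reindex_bij_betw[OF bij_betw_block_colourings[OF P]])
  finally show ?thesis .
qed

lemma partition_on_orbits:
  assumes "\<sigma> permutes A" "finite A"
  shows "partition_on A ((\<lambda>x. orbit \<sigma> x) ` A)"
proof (rule partition_onI)
  have "permutation \<sigma>" using assms by (auto simp: permutation_permutes)
  then have "x \<in> orbit \<sigma> x" for x by (rule permutation_self_in_orbit)
  then show "\<Union>((\<lambda>x. orbit \<sigma> x) ` A) = A"
    using permutes_orbit_subset[OF assms(1)] by auto
  have orbit_eq: "orbit \<sigma> z = orbit \<sigma> x" if "z \<in> orbit \<sigma> x" for x z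
    using orbit_cyclic_eq3[OF cyclic_on_orbit[OF assms] that] .
  show "disjnt B B'"
    if orbits: "B \<in> (\<lambda>x. orbit \<sigma> x) ` A" "B' \<in> (\<lambda>x. orbit \<sigma> x) ` A" and "B \<noteq> B'" for B B'
  proof (rule ccontr)
    assume "\<not> disjnt B B'"
    then obtain z where "z \<in> B" "z \<in> B'" by (auto simp: disjnt_def)
    obtain x x' where "B = orbit \<sigma> x" "B' = orbit \<sigma> x'" using orbits by blast
    with \<open>z \<in> B\<close> \<open>z \<in> B'\<close> have "orbit \<sigma> z = B" "orbit \<sigma> z = B'"
      using orbit_eq by blast+
    with \<open>B \<noteq> B'\<close> show False by simp
  qed
  show "{} \<notin> (\<lambda>x. orbit \<sigma> x) ` A"
    using orbit_nonempty by (metis imageE)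
qed

lemma constant_on_orbits_iff:
  assumes "\<sigma> permutes A" "finite A"
  shows "(\<forall>B\<in>(\<lambda>x. orbit \<sigma> x) ` A. \<forall>y\<in>B. \<forall>z\<in>B. c y = c z) \<longleftrightarrow> (\<forall>x\<in>A. c (\<sigma> x) = c x)"
proof
  assume orbit_constant: "\<forall>B\<in>(\<lambda>x. orbit \<sigma> x) ` A. \<forall>y\<in>B. \<forall>z\<in>B. c y = c z"
  show "\<forall>x\<in>A. c (\<sigma> x) = c x"
  proof
    fix x assume "x \<in> A"
    then have "\<forall>y\<in>orbit \<sigma> x. \<forall>z\<in>orbit \<sigma> x. c y = c z" using orbit_constant by blast
    moreover have "permutation \<sigma>" using assms by (auto simp: permutation_permutes)
    then have "x \<in> orbit \<sigma> x" "\<sigma> x \<in> orbit \<sigma> x"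
      by (simp_all add: permutation_self_in_orbit orbit.base)
    ultimately show "c (\<sigma> x) = c x" by blast
  qed
next
  assume invariant: "\<forall>x\<in>A. c (\<sigma> x) = c x"
  have orbit_const: "c y = c x" if "x \<in> A" "y \<in> orbit \<sigma> x" for x y
    using that(2)
  proof (induction rule: orbit.induct)
    case base
    then show ?case using invariant that(1) by simp
  next
    case (step y)
    then have "y \<in> A" using permutes_orbit_subset[OF assms(1) that(1)] by blast
    then show ?case using invariant step.IH by simp
  qed
  show "\<forall>B\<in>(\<lambda>x. orbit \<sigma> x) ` A. \<forall>y\<in>B. \<forall>z\<in>B. c y = c z"
  proof (intro ballI)
    fix B y z assume "B \<in> (\<lambda>x. orbit \<sigma> x) ` A" "y \<in> B" "z \<in> B"
    then obtain x where "x \<in> A" "B = orbit \<sigma> x" by blast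
    with \<open>y \<in> B\<close> \<open>z \<in> B\<close> have "y \<in> orbit \<sigma> x" "z \<in> orbit \<sigma> x" by simp_all
    then show "c y = c z"
      using orbit_const[OF \<open>x \<in> A\<close> \<open>y \<in> orbit \<sigma> x\<close>] orbit_const[OF \<open>x \<in> A\<close> \<open>z \<in> orbit \<sigma> x\<close>]
      by simp
  qed
qed

lemma prod_orbits_eq_sum_invariant_colourings:
  fixes a :: "'i \<Rightarrow> 'c :: comm_semiring_1"
  assumes "\<sigma> permutes A" "finite A" "finite I"
  shows "(\<Prod>B\<in>(\<lambda>x. orbit \<sigma> x) ` A. \<Sum>i\<in>I. a i ^ card B)
       = (\<Sum>c\<in>{c \<in> A \<rightarrow>\<^sub>E I. \<forall>x\<in>A. c (\<sigma> x) = c x}. \<Prod>x\<in>A. a (c x))"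
  using prod_sum_partition_on[OF assms(2) partition_on_orbits[OF assms(1,2)] assms(3)]
  by (simp only: constant_on_orbits_iff[OF assms(1,2)])

section \<open>Young subgroups as stabilisers of block colourings\<close>

lemma permutes_preserves_fibres_iff:
  assumes "\<tau> permutes A"
  shows "(\<forall>y. \<tau> ` {x \<in> A. c x = y} = {x \<in> A. c x = y}) \<longleftrightarrow> (\<forall>x\<in>A. c (\<tau> x) = c x)"
proof
  assume fibres: "\<forall>y. \<tau> ` {x \<in> A. c x = y} = {x \<in> A. c x = y}"
  show "\<forall>x\<in>A. c (\<tau> x) = c x"
  proof
    fix x assume "x \<in> A"
    then have "\<tau> x \<in> \<tau> ` {x' \<in> A. c x' = c x}" by simp
    also have "\<tau> ` {x' \<in> A. c x' = c x} = {x' \<in> A. c x' = c x}" using fibres by (rule spec)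
    finally show "c (\<tau> x) = c x" by simp
  qed
next
  assume invariant: "\<forall>x\<in>A. c (\<tau> x) = c x"
  have preimage: "z \<in> \<tau> ` {x \<in> A. c x = c z}" if "z \<in> A" for z
  proof
    show "z = \<tau> (inv \<tau> z)" using permutes_inverses(1)[OF assms] by simp
    have "inv \<tau> z \<in> A" using that permutes_in_image[OF permutes_inv[OF assms]] by simp
    then have "c (inv \<tau> z) = c (\<tau> (inv \<tau> z))" using invariant by simp
    then have "c (inv \<tau> z) = c z" using permutes_inverses(1)[OF assms] by simp
    with \<open>inv \<tau> z \<in> A\<close> show "inv \<tau> z \<in> {x \<in> A. c x = c z}" by simp
  qed
  show "\<forall>y. \<tau> ` {x \<in> A. c x = y} = {x \<in> A. c x = y}"
  proof
    fix y
    show "\<tau> ` {x \<in> A. c x = y} = {x \<in> A. c x = y}"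
    proof
      show "\<tau> ` {x \<in> A. c x = y} \<subseteq> {x \<in> A. c x = y}"
        using invariant permutes_in_image[OF assms] by auto
      show "{x \<in> A. c x = y} \<subseteq> \<tau> ` {x \<in> A. c x = y}"
        using preimage by auto
    qed
  qed
qed

lemma sum_list_take_Suc:
  "sum_list (take (Suc j) l) = sum_list (take j l) + (if j < length l then l ! j else 0)"
  by (simp add: take_Suc_conv_app_nth)

lemma sum_list_take_mono:
  fixes l :: "nat list"
  assumes "j \<le> j'"
  shows "sum_list (take j l) \<le> sum_list (take j' l)"
  using assms
proof (induction j' rule: dec_induct)
  case (step k)
  then show ?case using sum_list_take_Suc[of k l] by simp
qed simp

lemma card_block: "j < length l \<Longrightarrow> card (block l j) = l ! j"
  by (simp add: block_def sum_list_take_Suc)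

lemma block_subset:
  assumes "sum_list l = n"
  shows "block l j \<subseteq> {1..n}"
proof -
  have "sum_list (take (Suc j) l) \<le> sum_list (take (max (Suc j) (length l)) l)"
    by (rule sum_list_take_mono) simp
  then show ?thesis using assms by (auto simp: block_def)
qed

definition block_index :: "nat list \<Rightarrow> nat \<Rightarrow> nat" where
  "block_index l x = (LEAST j. x \<le> sum_list (take (Suc j) l))"

lemma block_index_eq:
  assumes "x \<in> block l j"
  shows "block_index l x = j"
  unfolding block_index_def
proof (rule Least_equality)
  show "x \<le> sum_list (take (Suc j) l)" using assms by (simp add: block_def)
  fix j' assume "x \<le> sum_list (take (Suc j') l)"
  then show "j \<le> j'"
    using assms sum_list_take_mono[of "Suc j'" j l] by (fastforce simp: block_def)
qed

lemma block_index_mem: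
  assumes "sum_list l = n" "x \<in> {1..n}"
  shows "block_index l x < length l" "x \<in> block l (block_index l x)"
proof -
  define j where "j = block_index l x"
  have "x \<le> sum_list (take (Suc (length l)) l)" using assms by simp
  then have upper: "x \<le> sum_list (take (Suc j) l)"
    unfolding j_def block_index_def by (rule LeastI)
  have lower: "sum_list (take j l) < x"
  proof (cases j)
    case 0
    then show ?thesis using assms by simp
  next
    case (Suc j0)
    have "\<not> x \<le> sum_list (take (Suc j0) l)"
      using Suc not_less_Least[of j0 "\<lambda>j. x \<le> sum_list (take (Suc j) l)"]
      by (simp add: j_def block_index_def)
    then show ?thesis using Suc by simp
  qed
  show "j < length l"
  proof (rule ccontr)
    assume "\<not> j < length l"
    then show False using lower assms by simp
  qed
  show "x \<in> block l j" using upper lower by (simp add: block_def)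
qed

lemma fibre_block_index:
  assumes "sum_list l = n"
  shows "{x \<in> {1..n}. block_index l x = j} = (if j < length l then block l j else {})"
proof (cases "j < length l")
  case True
  have "{x \<in> {1..n}. block_index l x = j} = block l j"
  proof (intro equalityI subsetI)
    fix x assume "x \<in> {x \<in> {1..n}. block_index l x = j}"
    then have "x \<in> {1..n}" "block_index l x = j" by simp_all
    then show "x \<in> block l j" using block_index_mem(2)[OF assms \<open>x \<in> {1..n}\<close>] by simp
  next
    fix x assume "x \<in> block l j"
    then have "x \<in> {1..n}" "block_index l x = j"
      by (rule subsetD[OF block_subset[OF assms]], rule block_index_eq)
    then show "x \<in> {x \<in> {1..n}. block_index l x = j}" by simp
  qed
  with True show ?thesis by simp
next
  case False
  have "block_index l x \<noteq> j" if "x \<in> {1..n}" for x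
    using block_index_mem(1)[OF assms that] False by simp
  then show ?thesis using False by auto
qed

lemma young_subgroup_iff_block_index:
  assumes "sum_list l = n" "\<tau> permutes {1..n}"
  shows "\<tau> \<in> young_subgroup n l \<longleftrightarrow> (\<forall>x\<in>{1..n}. block_index l (\<tau> x) = block_index l x)"
proof -
  have "\<tau> \<in> young_subgroup n l \<longleftrightarrow> (\<forall>j<length l. \<tau> ` block l j = block l j)"
    using assms(2) by (simp add: young_subgroup_def)
  also have "\<dots> \<longleftrightarrow>
      (\<forall>j. \<tau> ` {x \<in> {1..n}. block_index l x = j} = {x \<in> {1..n}. block_index l x = j})"
  proof (intro iffI allI impI)
    fix j
    assume "\<forall>j<length l. \<tau> ` block l j = block l j"
    then show "\<tau> ` {x \<in> {1..n}. block_index l x = j} = {x \<in> {1..n}. block_index l x = j}"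
      by (cases "j < length l") (simp_all only: fibre_block_index[OF assms(1)] if_True if_False image_empty)
  next
    fix j
    assume fibres: "\<forall>j. \<tau> ` {x \<in> {1..n}. block_index l x = j} = {x \<in> {1..n}. block_index l x = j}"
      and "j < length l"
    from fibres have "\<tau> ` {x \<in> {1..n}. block_index l x = j} = {x \<in> {1..n}. block_index l x = j}"
      by (rule spec)
    moreover have "{x \<in> {1..n}. block_index l x = j} = block l j"
      using fibre_block_index[OF assms(1), of j] if_P[OF \<open>j < length l\<close>] by (simp only:)
    ultimately show "\<tau> ` block l j = block l j" by (simp only:)
  qed
  also have "\<dots> \<longleftrightarrow> (\<forall>x\<in>{1..n}. block_index l (\<tau> x) = block_index l x)"
    by (rule permutes_preserves_fibres_iff[OF assms(2)])
  finally show ?thesis .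
qed

lemma permutes_matching_fibres:
  assumes "finite A" and same_card: "\<And>y. card {x \<in> A. f x = y} = card {x \<in> A. g x = y}"
  obtains q where "q permutes A" "\<And>x. x \<in> A \<Longrightarrow> f x = g (q x)"
proof -
  let ?F = "\<lambda>y. {x \<in> A. f x = y}" and ?G = "\<lambda>y. {x \<in> A. g x = y}"
  have "\<exists>h. bij_betw h (?F y) (?G y)" for y
    using assms by (intro finite_same_card_bij) auto
  then obtain h where h: "\<And>y. bij_betw (h y) (?F y) (?G y)" by metis
  define q where "q x = (if x \<in> A then h (f x) x else x)" for x
  have "bij_betw q (?F y) (?G y) = bij_betw (h y) (?F y) (?G y)" for y
    by (rule bij_betw_cong) (simp add: q_def)
  with h have "bij_betw q (\<Union>y\<in>f ` A. ?F y) (\<Union>y\<in>f ` A. ?G y)"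
    by (intro bij_betw_UNION_disjoint) (auto simp: disjoint_family_on_def)
  moreover have "(\<Union>y\<in>f ` A. ?F y) = A" by auto
  moreover have "(\<Union>y\<in>f ` A. ?G y) = A"
  proof -
    have "g x \<in> f ` A" if "x \<in> A" for x
    proof -
      have "?G (g x) \<noteq> {}" using that by auto
      then have "card (?F (g x)) \<noteq> 0" using same_card[of "g x"] assms(1) by simp
      then obtain x' where "x' \<in> ?F (g x)" by (metis card.empty ex_in_conv)
      then have "g x = f x'" "x' \<in> A" by simp_all
      then show ?thesis by (rule image_eqI)
    qed
    then show ?thesis by auto
  qed
  ultimately have "bij_betw q A A" by simp
  then have "q permutes A" by (rule bij_imp_permutes) (simp add: q_def)
  moreover have "f x = g (q x)" if "x \<in> A" for x
    using bij_betwE[OF h[of "f x"]] that by (simp add: q_def)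
  ultimately show ?thesis using that by blast
qed

lemma invariant_colouring_conj:
  assumes q: "q permutes A" and \<sigma>: "\<sigma> permutes A" and c: "\<And>x. x \<in> A \<Longrightarrow> c x = c' (q x)"
  shows "(\<forall>x\<in>A. c (\<sigma> x) = c x) \<longleftrightarrow> (\<forall>y\<in>A. c' ((q \<circ> \<sigma> \<circ> inv q) y) = c' y)"
proof
  assume invariant: "\<forall>x\<in>A. c (\<sigma> x) = c x"
  show "\<forall>y\<in>A. c' ((q \<circ> \<sigma> \<circ> inv q) y) = c' y"
  proof
    fix y assume "y \<in> A"
    define x where "x = inv q y"
    have x: "x \<in> A" "q x = y"
      using \<open>y \<in> A\<close> permutes_in_image[OF permutes_inv[OF q]] permutes_inverses[OF q]
      by (auto simp: x_def)
    have "c' ((q \<circ> \<sigma> \<circ> inv q) y) = c' (q (\<sigma> x))" by (simp add: x_def)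
    also have "\<dots> = c (\<sigma> x)" using c[of "\<sigma> x"] x(1) permutes_in_image[OF \<sigma>] by simp
    also have "\<dots> = c x" using invariant x(1) by simp
    also have "\<dots> = c' y" using c[OF x(1)] x(2) by simp
    finally show "c' ((q \<circ> \<sigma> \<circ> inv q) y) = c' y" .
  qed
next
  assume invariant: "\<forall>y\<in>A. c' ((q \<circ> \<sigma> \<circ> inv q) y) = c' y"
  show "\<forall>x\<in>A. c (\<sigma> x) = c x"
  proof
    fix x assume "x \<in> A"
    have "c (\<sigma> x) = c' (q (\<sigma> x))"
      using c[of "\<sigma> x"] \<open>x \<in> A\<close> permutes_in_image[OF \<sigma>] by simp
    also have "\<dots> = c' ((q \<circ> \<sigma> \<circ> inv q) (q x))"
      using permutes_inverses(2)[OF q] by simp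
    also have "\<dots> = c' (q x)"
      using invariant \<open>x \<in> A\<close> permutes_in_image[OF q] by simp
    also have "\<dots> = c x" using c[OF \<open>x \<in> A\<close>] by simp
    finally show "c (\<sigma> x) = c x" .
  qed
qed

lemma bij_betw_conj:
  assumes q: "q permutes A"
    and "S \<subseteq> {\<sigma>. \<sigma> permutes A}" "T \<subseteq> {\<sigma>. \<sigma> permutes A}"
    and S_T: "\<And>\<sigma>. \<sigma> permutes A \<Longrightarrow> \<sigma> \<in> S \<longleftrightarrow> q \<circ> \<sigma> \<circ> inv q \<in> T"
  shows "bij_betw (\<lambda>\<sigma>. q \<circ> \<sigma> \<circ> inv q) S T"
proof (rule bij_betw_byWitness[where f' = "\<lambda>\<tau>. inv q \<circ> \<tau> \<circ> q"])
  show "\<forall>\<sigma>\<in>S. inv q \<circ> (q \<circ> \<sigma> \<circ> inv q) \<circ> q = \<sigma>"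
    by (simp add: fun_eq_iff permutes_inverses[OF q])
  show "\<forall>\<tau>\<in>T. q \<circ> (inv q \<circ> \<tau> \<circ> q) \<circ> inv q = \<tau>"
    by (simp add: fun_eq_iff permutes_inverses[OF q])
  show "(\<lambda>\<sigma>. q \<circ> \<sigma> \<circ> inv q) ` S \<subseteq> T"
    using assms(2) S_T by auto
  show "(\<lambda>\<tau>. inv q \<circ> \<tau> \<circ> q) ` T \<subseteq> S"
  proof
    fix \<sigma> assume "\<sigma> \<in> (\<lambda>\<tau>. inv q \<circ> \<tau> \<circ> q) ` T"
    then obtain \<tau> where \<tau>: "\<tau> \<in> T" "\<sigma> = inv q \<circ> \<tau> \<circ> q" by blast
    have "\<tau> permutes A" using assms(3) \<tau>(1) by blast
    then have "\<sigma> permutes A"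
      unfolding \<tau>(2) by (intro permutes_compose permutes_inv q)
    moreover have "q \<circ> \<sigma> \<circ> inv q = \<tau>"
      using \<tau>(2) by (simp add: fun_eq_iff permutes_inverses[OF q])
    ultimately show "\<sigma> \<in> S" using S_T \<tau>(1) by blast
  qed
qed

definition colour_counts :: "nat \<Rightarrow> nat \<Rightarrow> (nat \<Rightarrow> nat) \<Rightarrow> nat list" where
  "colour_counts n \<theta> c = map (\<lambda>i. card {x \<in> {1..n}. c x = i}) [0..<\<theta>]"

definition sort_desc :: "nat list \<Rightarrow> nat list" where
  "sort_desc xs = rev (sort xs)"

lemma length_colour_counts [simp]: "length (colour_counts n \<theta> c) = \<theta>"
  by (simp add: colour_counts_def)

lemma nth_colour_counts: "i < \<theta> \<Longrightarrow> colour_counts n \<theta> c ! i = card {x \<in> {1..n}. c x = i}"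
  by (simp add: colour_counts_def)

lemma sum_colour_counts:
  assumes "c \<in> {1..n} \<rightarrow>\<^sub>E {..<\<theta>}"
  shows "sum_list (colour_counts n \<theta> c) = n"
proof -
  have "sum_list (colour_counts n \<theta> c) = (\<Sum>i<\<theta>. card {x \<in> {1..n}. c x = i})"
    by (simp add: colour_counts_def interv_sum_list_conv_sum_set_nat lessThan_atLeast0)
  also have "\<dots> = (\<Sum>i<\<theta>. \<Sum>x\<in>{x \<in> {1..n}. c x = i}. 1)" by simp
  also have "\<dots> = (\<Sum>x\<in>{1..n}. 1)"
    by (rule sum.group) (use assms in auto)
  finally show ?thesis by simp
qed

lemma mset_sort_desc [simp]: "mset (sort_desc xs) = mset xs"
  by (simp add: sort_desc_def)

lemma sum_list_sort_desc [simp]: "sum_list (sort_desc xs) = sum_list xs"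
  by (metis mset_sort_desc sum_mset_sum_list)

lemma card_fibre_colouring:
  assumes "c \<in> {1..n} \<rightarrow>\<^sub>E {..<\<theta>}"
  shows "card {x \<in> {1..n}. c x = i} = (if i < \<theta> then colour_counts n \<theta> c ! i else 0)"
proof (cases "i < \<theta>")
  case False
  have "c x < \<theta>" if "x \<in> {1..n}" for x using PiE_mem[OF assms that] by simp
  then have "{x \<in> {1..n}. c x = i} = {}" using False by fastforce
  then show ?thesis using False by (simp only: card.empty if_False)
qed (simp only: nth_colour_counts if_True)

lemma card_fibre_block_colouring:
  assumes "sum_list l = n" "\<rho> permutes {..<length l}"
  shows "card {x \<in> {1..n}. \<rho> (block_index l x) = y} = (if y < length l then l ! inv \<rho> y else 0)"
proof (cases "y < length l")
  case True
  define j where "j = inv \<rho> y"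
  have j: "j < length l" "\<rho> j = y"
    using True permutes_in_image[OF permutes_inv[OF assms(2)]] permutes_inverses[OF assms(2)]
    by (auto simp: j_def)
  have "{x \<in> {1..n}. \<rho> (block_index l x) = y} = {x \<in> {1..n}. block_index l x = j}"
    using permutes_inj[OF assms(2)] by (auto simp: inj_eq j(2)[symmetric])
  also have "\<dots> = block l j"
    using fibre_block_index[OF assms(1), of j] j(1) by (simp only: if_True)
  finally show ?thesis using card_block[OF j(1)] True by (simp add: j_def)
next
  case False
  have "\<rho> (block_index l x) < length l" if "x \<in> {1..n}" for x
    using block_index_mem(1)[OF assms(1) that] permutes_in_image[OF assms(2)] by simp
  then have "{x \<in> {1..n}. \<rho> (block_index l x) = y} = {}" using False by fastforce
  then show ?thesis using False by (simp only: card.empty if_False)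
qed

lemma block_recolouring:
  assumes c: "c \<in> {1..n} \<rightarrow>\<^sub>E {..<\<theta>}"
  obtains q \<rho> where "q permutes {1..n}" "inj \<rho>"
    "\<And>x. x \<in> {1..n} \<Longrightarrow> c x = \<rho> (block_index (sort_desc (colour_counts n \<theta> c)) (q x))"
proof -
  let ?\<kappa> = "colour_counts n \<theta> c"
  let ?l = "sort_desc ?\<kappa>"
  have "mset ?l = mset ?\<kappa>" by simp
  then obtain \<rho> where \<rho>: "\<rho> permutes {..<length ?\<kappa>}" "permute_list \<rho> ?\<kappa> = ?l"
    by (rule mset_eq_permutation)
  have length_l: "length ?l = \<theta>" using mset_eq_length[OF mset_sort_desc] by simp
  have \<rho>_l: "\<rho> permutes {..<length ?l}" using \<rho>(1) length_l by simp
  have sum_l: "sum_list ?l = n" using sum_colour_counts[OF c] by simp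
  have l_inv: "?l ! inv \<rho> y = ?\<kappa> ! y" if "y < \<theta>" for y
  proof -
    have "inv \<rho> y < length ?\<kappa>" using that permutes_in_image[OF permutes_inv[OF \<rho>(1)]] by simp
    then show ?thesis
      using permute_list_nth[OF \<rho>(1)] \<rho>(2) permutes_inverses(1)[OF \<rho>(1)] by metis
  qed
  have same_card: "card {x \<in> {1..n}. c x = y} = card {x \<in> {1..n}. \<rho> (block_index ?l x) = y}" for y
    by (simp only: card_fibre_colouring[OF c] card_fibre_block_colouring[OF sum_l \<rho>_l] length_l l_inv
        cong: if_cong)
  obtain q where "q permutes {1..n}" "\<And>x. x \<in> {1..n} \<Longrightarrow> c x = \<rho> (block_index ?l (q x))"
    using permutes_matching_fibres[OF finite_atLeastAtMost same_card] by blast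
  with that show ?thesis using permutes_inj[OF \<rho>(1)] by blast
qed

lemma sum_invariant_perms_eq_sum_young_subgroup:
  fixes f :: "(nat \<Rightarrow> nat) \<Rightarrow> 'a :: comm_monoid_add"
  assumes f_conj: "\<And>q \<sigma>. q permutes {1..n} \<Longrightarrow> \<sigma> permutes {1..n} \<Longrightarrow> f (q \<circ> \<sigma> \<circ> inv q) = f \<sigma>"
    and c: "c \<in> {1..n} \<rightarrow>\<^sub>E {..<\<theta>}"
  shows "(\<Sum>\<sigma> | \<sigma> permutes {1..n} \<and> (\<forall>x\<in>{1..n}. c (\<sigma> x) = c x). f \<sigma>)
       = (\<Sum>\<sigma>\<in>young_subgroup n (sort_desc (colour_counts n \<theta> c)). f \<sigma>)"
proof -
  let ?l = "sort_desc (colour_counts n \<theta> c)"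
  let ?S = "{\<sigma>. \<sigma> permutes {1..n} \<and> (\<forall>x\<in>{1..n}. c (\<sigma> x) = c x)}"
  obtain q \<rho> where q: "q permutes {1..n}" and "inj \<rho>"
    and c_q: "\<And>x. x \<in> {1..n} \<Longrightarrow> c x = \<rho> (block_index ?l (q x))"
    using block_recolouring[OF c] by blast
  have sum_l: "sum_list ?l = n" using sum_colour_counts[OF c] by simp
  have S_young: "\<sigma> \<in> ?S \<longleftrightarrow> q \<circ> \<sigma> \<circ> inv q \<in> young_subgroup n ?l" if \<sigma>: "\<sigma> permutes {1..n}" for \<sigma>
  proof -
    have "\<sigma> \<in> ?S \<longleftrightarrow>
        (\<forall>y\<in>{1..n}. \<rho> (block_index ?l ((q \<circ> \<sigma> \<circ> inv q) y)) = \<rho> (block_index ?l y))"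
      using invariant_colouring_conj[of q "{1..n}" \<sigma> c "\<lambda>y. \<rho> (block_index ?l y)", OF q \<sigma> c_q] \<sigma>
      by simp
    also have "\<dots> \<longleftrightarrow> (\<forall>y\<in>{1..n}. block_index ?l ((q \<circ> \<sigma> \<circ> inv q) y) = block_index ?l y)"
      using \<open>inj \<rho>\<close> by (simp add: inj_eq)
    also have "\<dots> \<longleftrightarrow> q \<circ> \<sigma> \<circ> inv q \<in> young_subgroup n ?l"
      using q \<sigma> by (intro young_subgroup_iff_block_index[OF sum_l, symmetric] permutes_compose permutes_inv)
    finally show ?thesis .
  qed
  have "?S \<subseteq> {\<sigma>. \<sigma> permutes {1..n}}" "young_subgroup n ?l \<subseteq> {\<sigma>. \<sigma> permutes {1..n}}"
    by (auto simp: young_subgroup_def)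
  then have "bij_betw (\<lambda>\<sigma>. q \<circ> \<sigma> \<circ> inv q) ?S (young_subgroup n ?l)"
    using S_young by (rule bij_betw_conj[OF q])
  then have "(\<Sum>\<tau>\<in>young_subgroup n ?l. f \<tau>) = (\<Sum>\<sigma>\<in>?S. f (q \<circ> \<sigma> \<circ> inv q))"
    by (rule sum.reindex_bij_betw[symmetric])
  also have "\<dots> = (\<Sum>\<sigma>\<in>?S. f \<sigma>)"
    using f_conj[OF q] by simp
  finally show ?thesis ..
qed

section \<open>Counting colourings by their colour counts\<close>

lemma prod_colouring_eq_prod_power_counts:
  fixes a :: "nat \<Rightarrow> 'c :: comm_monoid_mult"
  assumes "c \<in> {1..n} \<rightarrow>\<^sub>E {..<\<theta>}"
  shows "(\<Prod>x\<in>{1..n}. a (c x)) = (\<Prod>i<\<theta>. a i ^ (colour_counts n \<theta> c ! i))"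
proof -
  have "(\<Prod>x\<in>{1..n}. a (c x)) = (\<Prod>i<\<theta>. \<Prod>x\<in>{x \<in> {1..n}. c x = i}. a (c x))"
    by (rule prod.group[symmetric]) (use assms in auto)
  also have "\<dots> = (\<Prod>i<\<theta>. \<Prod>x\<in>{x \<in> {1..n}. c x = i}. a i)"
    by (intro prod.cong) auto
  also have "\<dots> = (\<Prod>i<\<theta>. a i ^ (colour_counts n \<theta> c ! i))"
    by (intro prod.cong) (auto simp: nth_colour_counts)
  finally show ?thesis .
qed

definition colour_multiset :: "nat \<Rightarrow> nat list \<Rightarrow> nat multiset" where
  "colour_multiset \<theta> k = (\<Sum>i<\<theta>. replicate_mset (k ! i) i)"

lemma count_colour_multiset: "count (colour_multiset \<theta> k) i = (if i < \<theta> then k ! i else 0)"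
  by (simp add: colour_multiset_def count_sum)

lemma size_colour_multiset: "length k = \<theta> \<Longrightarrow> size (colour_multiset \<theta> k) = sum_list k"
  by (simp add: colour_multiset_def sum_list_sum_nth lessThan_atLeast0)

lemma set_colour_multiset: "set_mset (colour_multiset \<theta> k) \<subseteq> {..<\<theta>}"
proof
  fix i assume "i \<in># colour_multiset \<theta> k"
  then have "count (colour_multiset \<theta> k) i \<noteq> 0" by simp
  then show "i \<in> {..<\<theta>}" by (simp add: count_colour_multiset split: if_splits)
qed

lemma count_mset_map_upt:
  "count (mset (map c [1..<Suc n])) i = card {x \<in> {1..n}. c x = i}"
proof -
  have "mset (map c [1..<Suc n]) = image_mset c (mset_set {1..n})"
    by (simp only: mset_map mset_upt atLeastLessThanSuc_atLeastAtMost)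
  then show ?thesis by (simp add: count_image_mset_eq_card_vimage)
qed

lemma colour_counts_eq_iff_mset:
  assumes c: "c \<in> {1..n} \<rightarrow>\<^sub>E {..<\<theta>}" and "length k = \<theta>"
  shows "colour_counts n \<theta> c = k \<longleftrightarrow> mset (map c [1..<Suc n]) = colour_multiset \<theta> k"
proof -
  have "count (mset (map c [1..<Suc n])) i = (if i < \<theta> then colour_counts n \<theta> c ! i else 0)" for i
    by (simp only: count_mset_map_upt card_fibre_colouring[OF c])
  then have "mset (map c [1..<Suc n]) = colour_multiset \<theta> k \<longleftrightarrow>
      (\<forall>i<\<theta>. colour_counts n \<theta> c ! i = k ! i)"
    by (auto simp: multiset_eq_iff count_colour_multiset)
  also have "\<dots> \<longleftrightarrow> colour_counts n \<theta> c = k"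
    using assms(2) by (simp add: list_eq_iff_nth_eq)
  finally show ?thesis ..
qed

lemma bij_betw_colourings_permutations_of_multiset:
  assumes k: "length k = \<theta>" "sum_list k = n"
  shows "bij_betw (\<lambda>c. map c [1..<Suc n]) {c \<in> {1..n} \<rightarrow>\<^sub>E {..<\<theta>}. colour_counts n \<theta> c = k}
           (permutations_of_multiset (colour_multiset \<theta> k))"
    (is "bij_betw ?list ?S ?P")
proof -
  let ?fun = "\<lambda>xs. \<lambda>x\<in>{1..n}. xs ! (x - 1)"
  have length_P: "length xs = n" if "xs \<in> ?P" for xs
    using arg_cong[OF permutations_of_multisetD[OF that], of size] size_colour_multiset k by simp
  have fun_P: "?fun xs \<in> {1..n} \<rightarrow>\<^sub>E {..<\<theta>}" if "xs \<in> ?P" for xs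
  proof -
    have "set xs \<subseteq> {..<\<theta>}"
      using set_colour_multiset permutations_of_multisetD[OF that] by (metis set_mset_mset)
    then have "xs ! (x - 1) \<in> {..<\<theta>}" if "x \<in> {1..n}" for x
      using that length_P[OF \<open>xs \<in> ?P\<close>] by (auto simp: subset_iff)
    then show ?thesis by simp
  qed
  show ?thesis
  proof (rule bij_betw_byWitness[where f' = ?fun])
    show "\<forall>c\<in>?S. ?fun (?list c) = c"
      by (auto simp: fun_eq_iff PiE_def extensional_def simp del: upt_Suc)
    show "\<forall>xs\<in>?P. ?list (?fun xs) = xs"
      using length_P by (auto intro!: nth_equalityI simp del: upt_Suc)
    show "?list ` ?S \<subseteq> ?P"
      using colour_counts_eq_iff_mset k(1) by (auto intro: permutations_of_multisetI)
    show "?fun ` ?P \<subseteq> ?S"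
    proof
      fix c assume "c \<in> ?fun ` ?P"
      then obtain xs where xs: "xs \<in> ?P" "c = ?fun xs" by blast
      have c: "c \<in> {1..n} \<rightarrow>\<^sub>E {..<\<theta>}" using fun_P[OF xs(1)] xs(2) by simp
      have "?list c = xs" using length_P[OF xs(1)] xs(2) by (auto intro!: nth_equalityI simp del: upt_Suc)
      then have "mset (?list c) = colour_multiset \<theta> k" using permutations_of_multisetD[OF xs(1)] by simp
      then have "colour_counts n \<theta> c = k" using colour_counts_eq_iff_mset[OF c k(1)] by (simp only:)
      with c show "c \<in> ?S" by simp
    qed
  qed
qed

lemma card_colourings_with_counts:
  assumes k: "length k = \<theta>" "sum_list k = n"
  shows "card {c \<in> {1..n} \<rightarrow>\<^sub>E {..<\<theta>}. colour_counts n \<theta> c = k} * (\<Prod>i<\<theta>. fact (k ! i)) = fact n"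
proof -
  let ?M = "colour_multiset \<theta> k"
  have "(\<Prod>x\<in>set_mset ?M. fact (count ?M x)) = (\<Prod>i<\<theta>. fact (count ?M i) :: nat)"
    by (rule prod.mono_neutral_left) (auto simp: set_colour_multiset simp flip: count_eq_zero_iff)
  then have "(\<Prod>x\<in>set_mset ?M. fact (count ?M x)) = (\<Prod>i<\<theta>. fact (k ! i) :: nat)"
    by (simp add: count_colour_multiset)
  then show ?thesis
    using bij_betw_same_card[OF bij_betw_colourings_permutations_of_multiset[OF k]]
      card_permutations_of_multiset_aux[of ?M] size_colour_multiset k
    by simp
qed

definition compositions :: "nat \<Rightarrow> nat \<Rightarrow> nat list set" where
  "compositions \<theta> n = {k. length k = \<theta> \<and> sum_list k = n}"

lemma finite_compositions: "finite (compositions \<theta> n)"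
proof -
  have "compositions \<theta> n \<subseteq> {xs. set xs \<subseteq> {..n} \<and> length xs = \<theta>}"
    by (auto simp: compositions_def member_le_sum_list)
  then show ?thesis by (rule finite_subset) (rule finite_lists_length_eq, simp)
qed

lemma multinom_eq_if_mset_eq:
  assumes "mset k = mset l"
  shows "multinom n k = multinom n l"
proof -
  have "(\<Prod>i<length xs. fact (xs ! i) :: real) = prod_mset (image_mset fact (mset xs))" for xs
    by (simp add: prod.list_conv_set_nth lessThan_atLeast0 prod_mset_prod_list flip: mset_map)
  with assms show ?thesis by (simp add: multinom_def)
qed

lemma sum_colourings_by_counts:
  fixes h :: "nat list \<Rightarrow> real"
  shows "(\<Sum>c\<in>{1..n} \<rightarrow>\<^sub>E {..<\<theta>}. h (colour_counts n \<theta> c))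
       = (\<Sum>k\<in>compositions \<theta> n. multinom n k * h k)"
proof -
  let ?S = "\<lambda>k. {c \<in> {1..n} \<rightarrow>\<^sub>E {..<\<theta>}. colour_counts n \<theta> c = k}"
  have "(\<Sum>c\<in>{1..n} \<rightarrow>\<^sub>E {..<\<theta>}. h (colour_counts n \<theta> c))
      = (\<Sum>k\<in>compositions \<theta> n. \<Sum>c\<in>?S k. h (colour_counts n \<theta> c))"
    using finite_compositions[of \<theta> n]
    by (intro sum.group[symmetric]) (auto simp: finite_PiE compositions_def sum_colour_counts)
  also have "\<dots> = (\<Sum>k\<in>compositions \<theta> n. multinom n k * h k)"
  proof (rule sum.cong[OF refl])
    fix k assume "k \<in> compositions \<theta> n"
    then have "card (?S k) * (\<Prod>i<\<theta>. fact (k ! i)) = fact n"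
      by (intro card_colourings_with_counts) (simp_all add: compositions_def)
    then have "real (card (?S k) * (\<Prod>i<\<theta>. fact (k ! i))) = fact n" by simp
    then have "real (card (?S k)) * (\<Prod>i<\<theta>. fact (k ! i)) = fact n"
      by (simp only: of_nat_mult of_nat_prod of_nat_fact)
    then have "real (card (?S k)) = multinom n k"
      using \<open>k \<in> compositions \<theta> n\<close> by (simp add: multinom_def compositions_def field_simps)
    moreover have "(\<Sum>c\<in>?S k. h (colour_counts n \<theta> c)) = (\<Sum>c\<in>?S k. h k)"
      by (rule sum.cong) auto
    ultimately show "(\<Sum>c\<in>?S k. h (colour_counts n \<theta> c)) = multinom n k * h k" by simp
  qed
  finally show ?thesis .
qed

lemma sort_desc_eq_if_reordering:
  assumes "l \<in> partitions_theta \<theta> n" "\<kappa> \<in> reorderings l"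
  shows "sort_desc \<kappa> = l"
proof -
  have "sorted (rev l)" using assms(1) by (simp add: partitions_theta_def sorted_wrt_rev)
  moreover have "mset (rev l) = mset \<kappa>" using assms(2) by (simp add: reorderings_def)
  ultimately have "sort \<kappa> = rev l" by (intro properties_for_sort)
  then show ?thesis by (simp add: sort_desc_def)
qed

lemma sum_compositions_by_sorting:
  "(\<Sum>k\<in>compositions \<theta> n. h k) = (\<Sum>l\<in>partitions_theta \<theta> n. \<Sum>\<kappa>\<in>reorderings l. h \<kappa>)"
proof -
  have sorted_partition: "sort_desc k \<in> partitions_theta \<theta> n" if "k \<in> compositions \<theta> n" for k
    using that mset_eq_length[OF mset_sort_desc[of k]] sum_list_sort_desc[of k]
    by (simp add: compositions_def partitions_theta_def sort_desc_def sorted_wrt_rev)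
  have fibre: "{k \<in> compositions \<theta> n. sort_desc k = l} = reorderings l"
    if "l \<in> partitions_theta \<theta> n" for l
  proof
    show "{k \<in> compositions \<theta> n. sort_desc k = l} \<subseteq> reorderings l"
      by (auto simp: reorderings_def mset_eq_length[OF mset_sort_desc])
    show "reorderings l \<subseteq> {k \<in> compositions \<theta> n. sort_desc k = l}"
      using that sort_desc_eq_if_reordering[OF that] sum_list_sort_desc
      by (fastforce simp: reorderings_def compositions_def partitions_theta_def)
  qed
  have "partitions_theta \<theta> n \<subseteq> compositions \<theta> n"
    by (auto simp: compositions_def partitions_theta_def)
  then have "(\<Sum>k\<in>compositions \<theta> n. h k)
      = (\<Sum>l\<in>partitions_theta \<theta> n. \<Sum>k\<in>{k \<in> compositions \<theta> n. sort_desc k = l}. h k)"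
    using sorted_partition finite_compositions
    by (intro sum.group[symmetric]) (auto intro: finite_subset)
  also have "\<dots> = (\<Sum>l\<in>partitions_theta \<theta> n. \<Sum>\<kappa>\<in>reorderings l. h \<kappa>)"
    by (rule sum.cong[OF refl]) (simp add: fibre)
  finally show ?thesis .
qed

lemma sum_perms_cycle_product_eq_sum_colourings:
  fixes f :: "(nat \<Rightarrow> nat) \<Rightarrow> 'r :: comm_semiring_1" and a :: "nat \<Rightarrow> 'r"
  shows "(\<Sum>\<sigma> | \<sigma> permutes {1..n}. f \<sigma> * (\<Prod>\<gamma>\<in>perm_cycles n \<sigma>. \<Sum>i<\<theta>. a i ^ card \<gamma>))
       = (\<Sum>c\<in>{1..n} \<rightarrow>\<^sub>E {..<\<theta>}. (\<Prod>x\<in>{1..n}. a (c x))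
            * (\<Sum>\<sigma> | \<sigma> permutes {1..n} \<and> (\<forall>x\<in>{1..n}. c (\<sigma> x) = c x). f \<sigma>))"
proof -
  let ?Perm = "{\<sigma>. \<sigma> permutes {1..n}}" and ?Col = "{1..n} \<rightarrow>\<^sub>E {..<\<theta>}"
  let ?w = "\<lambda>c. \<Prod>x\<in>{1..n}. a (c x)"
  have "(\<Sum>\<sigma>\<in>?Perm. f \<sigma> * (\<Prod>\<gamma>\<in>perm_cycles n \<sigma>. \<Sum>i<\<theta>. a i ^ card \<gamma>))
      = (\<Sum>\<sigma>\<in>?Perm. \<Sum>c\<in>?Col. if \<forall>x\<in>{1..n}. c (\<sigma> x) = c x then f \<sigma> * ?w c else 0)"
  proof (rule sum.cong[OF refl])
    fix \<sigma> assume "\<sigma> \<in> ?Perm"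
    then have "(\<Prod>\<gamma>\<in>perm_cycles n \<sigma>. \<Sum>i<\<theta>. a i ^ card \<gamma>)
        = (\<Sum>c\<in>{c \<in> ?Col. \<forall>x\<in>{1..n}. c (\<sigma> x) = c x}. ?w c)"
      unfolding perm_cycles_def by (intro prod_orbits_eq_sum_invariant_colourings) auto
    moreover have "finite ?Col" by (simp add: finite_PiE)
    ultimately show "f \<sigma> * (\<Prod>\<gamma>\<in>perm_cycles n \<sigma>. \<Sum>i<\<theta>. a i ^ card \<gamma>)
        = (\<Sum>c\<in>?Col. if \<forall>x\<in>{1..n}. c (\<sigma> x) = c x then f \<sigma> * ?w c else 0)"
      by (simp only: sum_distrib_left sum.inter_filter if_distrib[where f = "(*) (f \<sigma>)"] mult_zero_right)
  qed
  also have "\<dots> = (\<Sum>c\<in>?Col. ?w c * (\<Sum>\<sigma> | \<sigma> permutes {1..n} \<and> (\<forall>x\<in>{1..n}. c (\<sigma> x) = c x). f \<sigma>))"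
  proof -
    have "(\<Sum>\<sigma>\<in>?Perm. if \<forall>x\<in>{1..n}. c (\<sigma> x) = c x then f \<sigma> * ?w c else 0)
        = ?w c * (\<Sum>\<sigma> | \<sigma> permutes {1..n} \<and> (\<forall>x\<in>{1..n}. c (\<sigma> x) = c x). f \<sigma>)" for c
      by (simp add: sum_distrib_left sum.inter_filter[symmetric] finite_permutations mult.commute)
    then show ?thesis by (subst sum.swap) simp
  qed
  finally show ?thesis .
qed

lemma sum_class_function_cycle_product:
  fixes f :: "(nat \<Rightarrow> nat) \<Rightarrow> real" and a :: "nat \<Rightarrow> real"
  assumes f_conj: "\<And>q \<sigma>. q permutes {1..n} \<Longrightarrow> \<sigma> permutes {1..n} \<Longrightarrow> f (q \<circ> \<sigma> \<circ> inv q) = f \<sigma>"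
  shows "(\<Sum>\<sigma> | \<sigma> permutes {1..n}. f \<sigma> * (\<Prod>\<gamma>\<in>perm_cycles n \<sigma>. \<Sum>i<\<theta>. a i ^ card \<gamma>))
       = (\<Sum>l\<in>partitions_theta \<theta> n. multinom n l * (\<Sum>\<kappa>\<in>reorderings l. \<Prod>i<\<theta>. a i ^ (\<kappa> ! i))
            * (\<Sum>\<sigma>\<in>young_subgroup n l. f \<sigma>))"
proof -
  define Y where "Y l = (\<Sum>\<sigma>\<in>young_subgroup n l. f \<sigma>)" for l
  define h where "h k = (\<Prod>i<\<theta>. a i ^ (k ! i)) * Y (sort_desc k)" for k
  have "(\<Sum>\<sigma> | \<sigma> permutes {1..n}. f \<sigma> * (\<Prod>\<gamma>\<in>perm_cycles n \<sigma>. \<Sum>i<\<theta>. a i ^ card \<gamma>))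
      = (\<Sum>c\<in>{1..n} \<rightarrow>\<^sub>E {..<\<theta>}. (\<Prod>x\<in>{1..n}. a (c x))
            * (\<Sum>\<sigma> | \<sigma> permutes {1..n} \<and> (\<forall>x\<in>{1..n}. c (\<sigma> x) = c x). f \<sigma>))"
    by (rule sum_perms_cycle_product_eq_sum_colourings)
  also have "\<dots> = (\<Sum>c\<in>{1..n} \<rightarrow>\<^sub>E {..<\<theta>}. h (colour_counts n \<theta> c))"
  proof (rule sum.cong[OF refl])
    fix c assume c: "c \<in> {1..n} \<rightarrow>\<^sub>E {..<\<theta>}"
    show "(\<Prod>x\<in>{1..n}. a (c x)) * (\<Sum>\<sigma> | \<sigma> permutes {1..n} \<and> (\<forall>x\<in>{1..n}. c (\<sigma> x) = c x). f \<sigma>)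
        = h (colour_counts n \<theta> c)"
      by (simp only: h_def Y_def prod_colouring_eq_prod_power_counts[OF c]
          sum_invariant_perms_eq_sum_young_subgroup[OF f_conj c])
  qed
  also have "\<dots> = (\<Sum>k\<in>compositions \<theta> n. multinom n k * h k)"
    by (rule sum_colourings_by_counts)
  also have "\<dots> = (\<Sum>l\<in>partitions_theta \<theta> n. \<Sum>\<kappa>\<in>reorderings l. multinom n \<kappa> * h \<kappa>)"
    by (rule sum_compositions_by_sorting)
  also have "\<dots> = (\<Sum>l\<in>partitions_theta \<theta> n. multinom n l * (\<Sum>\<kappa>\<in>reorderings l. \<Prod>i<\<theta>. a i ^ (\<kappa> ! i)) * Y l)"
  proof (rule sum.cong[OF refl])
    fix l assume l: "l \<in> partitions_theta \<theta> n"
    have "multinom n \<kappa> * h \<kappa> = multinom n l * (\<Prod>i<\<theta>. a i ^ (\<kappa> ! i)) * Y l"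
      if "\<kappa> \<in> reorderings l" for \<kappa>
      using that multinom_eq_if_mset_eq[of \<kappa> l n] sort_desc_eq_if_reordering[OF l that]
      by (simp add: h_def reorderings_def)
    then show "(\<Sum>\<kappa>\<in>reorderings l. multinom n \<kappa> * h \<kappa>)
        = multinom n l * (\<Sum>\<kappa>\<in>reorderings l. \<Prod>i<\<theta>. a i ^ (\<kappa> ! i)) * Y l"
      by (simp add: sum_distrib_left sum_distrib_right)
  qed
  finally show ?thesis by (simp only: Y_def)
qed

theorem lemma2p1:
  fixes \<theta> n :: nat and \<beta> :: real and p :: "real list"
  assumes "\<theta> \<ge> 2" and "\<beta> > 0" and "n \<ge> 1"
    and "length p = \<theta>" and "\<forall>i<\<theta>. p ! i \<ge> 0" and "sum_list p = 1"
  shows "rp_expect n \<beta> (\<lambda>\<sigma>. \<Prod>\<gamma>\<in>perm_cycles n \<sigma>. (\<Sum>i<\<theta>. (p ! i) ^ card \<gamma>))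
       = (\<Sum>l\<in>partitions_theta \<theta> n. multinom n l
            * (\<Sum>\<kappa>\<in>reorderings l. \<Prod>i<\<theta>. (p ! i) ^ (\<kappa> ! i))
            * (\<Sum>\<sigma>\<in>young_subgroup n l. rp_law n \<beta> \<sigma>))"
proof -
  have "rp_expect n \<beta> (\<lambda>\<sigma>. \<Prod>\<gamma>\<in>perm_cycles n \<sigma>. (\<Sum>i<\<theta>. (p ! i) ^ card \<gamma>))
      = (\<Sum>\<sigma> | \<sigma> permutes {1..n}. rp_law n \<beta> \<sigma> * (\<Prod>\<gamma>\<in>perm_cycles n \<sigma>. \<Sum>i<\<theta>. (p ! i) ^ card \<gamma>))"
    by (rule rp_expect_eq_sum_rp_law)
  also have "\<dots> = (\<Sum>l\<in>partitions_theta \<theta> n. multinom n l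
            * (\<Sum>\<kappa>\<in>reorderings l. \<Prod>i<\<theta>. (p ! i) ^ (\<kappa> ! i))
            * (\<Sum>\<sigma>\<in>young_subgroup n l. rp_law n \<beta> \<sigma>))"
    by (rule sum_class_function_cycle_product) (rule rp_law_conj)
  finally show ?thesis .
qed

end
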